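(* Let $m\ge 1$ and $n\ge 3$ be odd integers. Then there exists a $\Delta$-permutation $\psi$ of $\mathbb{Z}_m\times\mathbb{Z}_{2n}$ such that (1) $\Delta=[\,^{2mn-6}(1,0),\ ^{3}(2,0),\ ^{1}(0,2),\ ^{1}(0,n-2),\ ^{1}(0,n)]$, and (2) $\psi(0,0)=(0,n)$ and $\psi(0,n)=(0,n+2)$.
   Context: The notation $[\,^{\alpha_1}a_1,\ldots,\,^{\alpha_t}a_t]$ denotes the multiset containing $\alpha_i$ copies of $a_i$. A $v$-list of a group is a multiset of $v$ elements of the group. Given a group $\Gamma$ (written additively) of order $v$ and a $v$-list $\Delta$ of $\Gamma$, a permutation $\varphi$ of $\Gamma$ is a $\Delta$-permutation if the multiset $[\varphi(a)-a \mid a\in\Gamma]$ equals $\Delta$. *)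

theory Defs
  imports "HOL-Library.Multiset"
begin

text \<open>The group Z_m x Z_k, with elements represented by their canonical
  representatives (a, b), 0 \<le> a < m, 0 \<le> b < k, and componentwise
  addition/subtraction modulo m and k.\<close>

definition zgrp :: "int \<Rightarrow> int \<Rightarrow> (int \<times> int) set" where
  "zgrp m k = {0..<m} \<times> {0..<k}"

definition zsub :: "int \<Rightarrow> int \<Rightarrow> int \<times> int \<Rightarrow> int \<times> int \<Rightarrow> int \<times> int" where
  "zsub m k x y = ((fst x - fst y) mod m, (snd x - snd y) mod k)"

definition zel :: "int \<Rightarrow> int \<Rightarrow> int \<Rightarrow> int \<Rightarrow> int \<times> int" where
  "zel m k a b = (a mod m, b mod k)"

definition is_Delta_perm ::
  "int \<Rightarrow> int \<Rightarrow> (int \<times> int) multiset \<Rightarrow> (int \<times> int \<Rightarrow> int \<times> int) \<Rightarrow> bool" where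
  "is_Delta_perm m k Delta phi \<longleftrightarrow>
     bij_betw phi (zgrp m k) (zgrp m k) \<and>
     image_mset (\<lambda>a. zsub m k (phi a) a) (mset_set (zgrp m k)) = Delta"

end

theory Submission
  imports Defs
begin

text \<open>Translate every element of \<open>\<int>\<^sub>m \<times> \<int>\<^sub>2\<^sub>n\<close> by \<open>(1, 0)\<close>, except that
  the three points \<open>(0, 0), (0, n), (0, n + 2)\<close> are taken out of their rows and permuted
  cyclically among themselves.  The cycle contributes the differences \<open>(0, n), (0, 2)\<close> and
  \<open>(0, -n - 2) = (0, n - 2)\<close>; in each of the three affected rows the translation has to jump over
  column 0, producing one difference \<open>(2, 0)\<close>; all remaining \<open>2mn - 6\<close> differences are
  \<open>(1, 0)\<close>.  For \<open>m = 1\<close> there are no jumps, but then \<open>(2, 0) = (1, 0)\<close>.\<close>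

definition cycle_points :: "int \<Rightarrow> (int \<times> int) set" where
  "cycle_points N = {(0, 0), (0, N), (0, N + 2)}"

definition jump_points :: "int \<Rightarrow> int \<Rightarrow> (int \<times> int) set" where
  "jump_points M N = {M - 1} \<times> {0, N, N + 2} - cycle_points N"

definition shift_points :: "int \<Rightarrow> int \<Rightarrow> (int \<times> int) set" where
  "shift_points M N = zgrp M (2 * N) - cycle_points N - jump_points M N"

definition shift_cycle :: "int \<Rightarrow> int \<Rightarrow> int \<times> int \<Rightarrow> int \<times> int" where
  "shift_cycle M N x =
    (if x = (0, 0) then (0, N)
     else if x = (0, N) then (0, N + 2)
     else if x = (0, N + 2) then (0, 0)
     else if snd x \<in> {0, N, N + 2} \<and> fst x = M - 1 then (1 mod M, snd x)
     else ((fst x + 1) mod M, snd x))"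

definition shift_cycle_inv :: "int \<Rightarrow> int \<Rightarrow> int \<times> int \<Rightarrow> int \<times> int" where
  "shift_cycle_inv M N x =
    (if x = (0, N) then (0, 0)
     else if x = (0, N + 2) then (0, N)
     else if x = (0, 0) then (0, N + 2)
     else if snd x \<in> {0, N, N + 2} \<and> fst x = 1 then (M - 1, snd x)
     else ((fst x - 1) mod M, snd x))"

lemma mod_add_one_eq:
  fixes a M :: int
  assumes "0 \<le> a" "a < M"
  shows "(a + 1) mod M = (if a = M - 1 then 0 else a + 1)"
  using assms by auto

lemma minus_one_mod_eq:
  fixes M :: int
  assumes "0 < M"
  shows "-1 mod M = M - 1"
  using assms by (cases "M = 1") (auto simp: zmod_zminus1_eq_if)

lemma replicate_mset_add:
  "replicate_mset (a + b) x = replicate_mset a x + replicate_mset b x"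
  by (rule multiset_eqI) simp

lemma image_mset_mset_set_const:
  assumes "\<And>x. x \<in> A \<Longrightarrow> f x = c"
  shows "image_mset f (mset_set A) = replicate_mset (card A) c"
proof (cases "finite A")
  case True
  then have "image_mset f (mset_set A) = image_mset (\<lambda>_. c) (mset_set A)"
    using assms by (intro image_mset_cong) simp
  then show ?thesis by (simp add: image_mset_const_eq)
qed simp

context
  fixes M N :: int
  assumes M: "M \<ge> 1" and N: "N \<ge> 3"
begin

lemma shift_cycle_in_zgrp:
  assumes "x \<in> zgrp M (2 * N)"
  shows "shift_cycle M N x \<in> zgrp M (2 * N)"
  using assms M N by (cases x) (auto simp: shift_cycle_def zgrp_def mod_add_one_eq)

lemma shift_cycle_inv_shift_cycle:
  assumes "x \<in> zgrp M (2 * N)"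
  shows "shift_cycle_inv M N (shift_cycle M N x) = x"
  using assms M N
  by (cases x) (auto simp: shift_cycle_def shift_cycle_inv_def zgrp_def mod_add_one_eq minus_one_mod_eq)

lemma bij_betw_shift_cycle: "bij_betw (shift_cycle M N) (zgrp M (2 * N)) (zgrp M (2 * N))"
proof -
  have fin: "finite (zgrp M (2 * N))" by (simp add: zgrp_def)
  have inj: "inj_on (shift_cycle M N) (zgrp M (2 * N))"
    by (rule inj_on_inverseI[where g = "shift_cycle_inv M N"]) (rule shift_cycle_inv_shift_cycle)
  moreover have "shift_cycle M N ` zgrp M (2 * N) \<subseteq> zgrp M (2 * N)"
    using shift_cycle_in_zgrp by blast
  ultimately show ?thesis using endo_inj_surj[OF fin] by (simp add: bij_betw_def)
qed

lemma mset_set_zgrp_split: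
  "mset_set (zgrp M (2 * N)) =
     mset_set (shift_points M N) + mset_set (jump_points M N) + mset_set (cycle_points N)"
proof -
  have sub: "cycle_points N \<subseteq> zgrp M (2 * N)" "jump_points M N \<subseteq> zgrp M (2 * N)"
    using M N by (auto simp: cycle_points_def jump_points_def zgrp_def)
  have fin: "finite (shift_points M N)" "finite (jump_points M N)" "finite (cycle_points N)"
    by (simp_all add: shift_points_def jump_points_def cycle_points_def zgrp_def)
  have "zgrp M (2 * N) = (shift_points M N \<union> jump_points M N) \<union> cycle_points N"
    using sub by (auto simp: shift_points_def)
  also have "mset_set \<dots> = mset_set (shift_points M N \<union> jump_points M N) + mset_set (cycle_points N)"
    using fin by (intro mset_set_Union) (auto simp: shift_points_def jump_points_def)
  also have "mset_set (shift_points M N \<union> jump_points M N) =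
      mset_set (shift_points M N) + mset_set (jump_points M N)"
    using fin by (intro mset_set_Union) (auto simp: shift_points_def)
  finally show ?thesis .
qed

lemma shift_cycle_diff_shift_points:
  assumes "x \<in> shift_points M N"
  shows "zsub M (2 * N) (shift_cycle M N x) x = zel M (2 * N) 1 0"
  using assms M N
  by (cases x) (auto simp: shift_points_def jump_points_def cycle_points_def zgrp_def
      shift_cycle_def zsub_def zel_def mod_diff_left_eq)

lemma shift_cycle_diff_jump_points:
  assumes "x \<in> jump_points M N"
  shows "zsub M (2 * N) (shift_cycle M N x) x = zel M (2 * N) 2 0"
proof -
  have "(2 - M) mod M = 2 mod M" by (simp add: mod_eq_dvd_iff)
  then show ?thesis using assms M N
    by (cases x) (auto simp: jump_points_def cycle_points_def shift_cycle_def zsub_def zel_def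
        mod_diff_left_eq)
qed

lemma shift_cycle_diffs_cycle_points:
  "image_mset (\<lambda>x. zsub M (2 * N) (shift_cycle M N x) x) (mset_set (cycle_points N)) =
     {# zel M (2 * N) 0 2, zel M (2 * N) 0 (N - 2), zel M (2 * N) 0 N #}"
proof -
  have "(- (N + 2)) mod (2 * N) = (N - 2) mod (2 * N)" by (simp add: mod_eq_dvd_iff)
  then show ?thesis using N
    by (simp add: cycle_points_def shift_cycle_def zsub_def zel_def add_mset_commute)
qed

lemma card_zgrp: "card (zgrp M (2 * N)) = nat (2 * M * N)"
  using M N by (simp add: zgrp_def card_cartesian_product nat_mult_distrib)

lemma card_jump_points: "card (jump_points M N) = (if M = 1 then 0 else 3)"
proof (cases "M = 1")
  case True
  then show ?thesis by (simp add: jump_points_def cycle_points_def)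
next
  case False
  then have "jump_points M N = {(M - 1, 0), (M - 1, N), (M - 1, N + 2)}"
    using M by (auto simp: jump_points_def cycle_points_def)
  then show ?thesis using False N by simp
qed

lemma card_shift_points:
  "card (shift_points M N) = nat (2 * M * N) - 3 - card (jump_points M N)"
proof -
  have sub: "cycle_points N \<subseteq> zgrp M (2 * N)" "jump_points M N \<subseteq> zgrp M (2 * N) - cycle_points N"
    using M N by (auto simp: cycle_points_def jump_points_def zgrp_def)
  have "card (shift_points M N) = card (zgrp M (2 * N) - cycle_points N) - card (jump_points M N)"
    unfolding shift_points_def using sub
    by (intro card_Diff_subset) (auto intro: finite_subset simp: zgrp_def)
  also have "card (zgrp M (2 * N) - cycle_points N) = nat (2 * M * N) - 3"
    using sub N by (simp add: card_Diff_subset card_zgrp cycle_points_def)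
  finally show ?thesis .
qed

lemma shift_cycle_diffs:
  "image_mset (\<lambda>x. zsub M (2 * N) (shift_cycle M N x) x) (mset_set (zgrp M (2 * N))) =
     replicate_mset (nat (2 * M * N) - 6) (zel M (2 * N) 1 0)
     + replicate_mset 3 (zel M (2 * N) 2 0)
     + {# zel M (2 * N) 0 2, zel M (2 * N) 0 (N - 2), zel M (2 * N) 0 N #}"
proof -
  have "replicate_mset (card (shift_points M N)) (zel M (2 * N) 1 0)
        + replicate_mset (card (jump_points M N)) (zel M (2 * N) 2 0) =
      replicate_mset (nat (2 * M * N) - 6) (zel M (2 * N) 1 0) + replicate_mset 3 (zel M (2 * N) 2 0)"
  proof (cases "M = 1")
    case True
    have jumps: "card (jump_points M N) = 0"
      using card_jump_points True by simp
    then have "card (shift_points M N) = (nat (2 * M * N) - 6) + 3"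
      using card_shift_points True N by simp
    moreover have "zel M (2 * N) 1 0 = zel M (2 * N) 2 0" using True by (simp add: zel_def)
    ultimately show ?thesis using jumps by (simp add: replicate_mset_add)
  next
    case False
    then show ?thesis by (simp add: card_shift_points card_jump_points)
  qed
  then show ?thesis
    by (simp add: mset_set_zgrp_split shift_cycle_diffs_cycle_points
        image_mset_mset_set_const shift_cycle_diff_shift_points shift_cycle_diff_jump_points)
qed

end

theorem mainTheorem3:
  fixes m n :: nat
  assumes "m \<ge> 1" and "odd m" and "n \<ge> 3" and "odd n"
  shows "\<exists>psi. is_Delta_perm (int m) (2 * int n)
            (replicate_mset (2 * m * n - 6) (zel (int m) (2 * int n) 1 0)
             + replicate_mset 3 (zel (int m) (2 * int n) 2 0)
             + {# zel (int m) (2 * int n) 0 2,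
                  zel (int m) (2 * int n) 0 (int n - 2),
                  zel (int m) (2 * int n) 0 (int n) #}) psi
          \<and> psi (0, 0) = (0, int n)
          \<and> psi (0, int n) = (0, int n + 2)"
proof (intro exI conjI)
  have M: "int m \<ge> 1" and N: "int n \<ge> 3" using assms by auto
  have "nat (2 * int m * int n) = 2 * m * n" by (simp add: nat_mult_distrib)
  then show "is_Delta_perm (int m) (2 * int n)
            (replicate_mset (2 * m * n - 6) (zel (int m) (2 * int n) 1 0)
             + replicate_mset 3 (zel (int m) (2 * int n) 2 0)
             + {# zel (int m) (2 * int n) 0 2,
                  zel (int m) (2 * int n) 0 (int n - 2),
                  zel (int m) (2 * int n) 0 (int n) #}) (shift_cycle (int m) (int n))"
    unfolding is_Delta_perm_def
    using bij_betw_shift_cycle[OF M N] shift_cycle_diffs[OF M N] by simp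
  show "shift_cycle (int m) (int n) (0, 0) = (0, int n)" by (simp add: shift_cycle_def)
  show "shift_cycle (int m) (int n) (0, int n) = (0, int n + 2)"
    using N by (simp add: shift_cycle_def)
qed

end
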